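(* Let $q$ be a prime power with $q=3m+1$, and let $a\in D_1^3\cup D_2^3$. Let $$M=\begin{pmatrix}1&a^2&a\\ a^{-2}&1&a^{-1}\\ a^{-1}&a&1\end{pmatrix}.$$ Then the $3\times 3$ block matrix whose $(i,j)$ block is $C_{M_{ij}}$ is the adjacency matrix of a directed strongly regular graph with parameters $(3(3m+1),\ 3m,\ m,\ m-1,\ m)$.
   Context: Fix a primitive element $\gamma$ of $\mathbb{F}_q$; $D_i^e=\gamma^i\langle\gamma^e\rangle$ ($e\mid q-1$) are the cyclotomic classes, here with $e=3$. For $\sigma\in\mathbb{F}_q^*$, $C_\sigma$ is the $q\times q$ $0$-$1$ matrix with rows and columns indexed by $\mathbb{F}_q$ and $(C_\sigma)_{x,y}=1$ iff $x\in\sigma y+D_0^e$. A directed strongly regular graph with parameters $(v,k,t,\lambda,\mu)$ is a digraph (no loops, no multiple arcs) on $v$ vertices whose adjacency matrix $A$ satisfies $A^2=tI+\lambda A+\mu(J-I-A)$ and $AJ=JA=kJ$. *)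

theory Defs
  imports Main
begin

definition primitive_elem :: "'a::{finite,field} \<Rightarrow> bool" where
  "primitive_elem \<gamma> \<longleftrightarrow> (\<forall>x. x \<noteq> 0 \<longrightarrow> (\<exists>n::nat. x = \<gamma> ^ n))"

definition cyc_class :: "'a::{finite,field} \<Rightarrow> nat \<Rightarrow> nat \<Rightarrow> 'a set" where
  "cyc_class \<gamma> e i = {\<gamma> ^ (i + e * k) | k. True}"

definition Cmat :: "'a::{finite,field} \<Rightarrow> nat \<Rightarrow> 'a \<Rightarrow> 'a \<Rightarrow> 'a \<Rightarrow> int" where
  "Cmat \<gamma> e \<sigma> x y = (if x \<in> {\<sigma> * y + d | d. d \<in> cyc_class \<gamma> e 0} then 1 else 0)"

definition Mmat :: "'a::field \<Rightarrow> nat \<Rightarrow> nat \<Rightarrow> 'a" where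
  "Mmat a i j =
     (if i = 0 then (if j = 0 then 1 else if j = 1 then a^2 else a)
      else if i = 1 then (if j = 0 then inverse (a^2) else if j = 1 then 1 else inverse a)
      else (if j = 0 then inverse a else if j = 1 then a else 1))"

definition block_adj :: "'a::{finite,field} \<Rightarrow> 'a \<Rightarrow> (nat \<times> 'a) \<Rightarrow> (nat \<times> 'a) \<Rightarrow> int" where
  "block_adj \<gamma> a u w = Cmat \<gamma> 3 (Mmat a (fst u) (fst w)) (snd u) (snd w)"

definition dsrg :: "'v set \<Rightarrow> ('v \<Rightarrow> 'v \<Rightarrow> int) \<Rightarrow> nat \<Rightarrow> nat \<Rightarrow> nat \<Rightarrow> nat \<Rightarrow> nat \<Rightarrow> bool" where
  "dsrg V A v k t lam \<mu> \<longleftrightarrow>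
     finite V \<and> card V = v \<and>
     (\<forall>x\<in>V. \<forall>y\<in>V. A x y = 0 \<or> A x y = 1) \<and>
     (\<forall>x\<in>V. A x x = 0) \<and>
     (\<forall>x\<in>V. \<forall>z\<in>V. (\<Sum>y\<in>V. A x y * A y z) =
        int t * (if x = z then 1 else 0) + int lam * A x z
        + int \<mu> * (1 - (if x = z then 1 else 0) - A x z)) \<and>
     (\<forall>x\<in>V. (\<Sum>y\<in>V. A x y) = int k) \<and>
     (\<forall>y\<in>V. (\<Sum>x\<in>V. A x y) = int k)"

end

theory Submission
  imports Defs "HOL-Library.Disjoint_Sets"
begin

text \<open>Write $D = D_0^3$ and $a = \gamma^n$ with $3 \nmid n$. The matrix $M$ has rank one,
  $M_{ij} = a^{s_j} / a^{s_i}$ with $s = (0, 2, 1)$. In the coordinates $x' = a^{s_i} x$ on the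
  $i$-th block, $(i, x) \to (j, y)$ is an arc iff $x' - y' \in a^{s_i} D = D_{n s_i}$, and since
  $3 \nmid n$ these three cyclotomic classes partition $\mathbb{F}_q^*$. So every vertex has $m$
  out- and in-neighbours in each block, and the walks of length two from $(i, x)$ to $(l, z)$
  correspond to the $y'$ with $x' - y' \in D_{n s_i}$ and $y' \ne z'$: the class containing
  $y' - z'$ determines the block of the middle vertex. Hence $A^2 = mJ - A$.\<close>

lemma card_preimage_minus_left:
  fixes S :: "'a::ab_group_add set"
  shows "card {y. c - y \<in> S} = card S"
proof -
  have "{y. c - y \<in> S} = (\<lambda>s. - s + c) ` S"
    by (auto simp: algebra_simps intro!: image_eqI[where x = "c - _"])
  then show ?thesis by (simp add: card_image inj_on_def)
qed

lemma card_preimage_minus_right: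
  fixes S :: "'a::ab_group_add set"
  shows "card {x. x - c \<in> S} = card S"
proof -
  have "{x. x - c \<in> S} = (\<lambda>s. s + c) ` S"
    by (auto intro!: image_eqI[where x = "_ - c"])
  then show ?thesis by (simp add: card_image inj_on_def)
qed

lemma sum_indicator_disjoint_family:
  assumes "disjoint_family_on S I" "finite I"
  shows "(\<Sum>j\<in>I. if t \<in> S j then 1 else 0 :: int) = (if t \<in> (\<Union>j\<in>I. S j) then 1 else 0)"
proof (cases "t \<in> (\<Union>j\<in>I. S j)")
  case True
  then obtain j0 where "j0 \<in> I" "t \<in> S j0" by blast
  then have "I \<inter> {j. t \<in> S j} = {j0}"
    using assms(1) by (auto simp: disjoint_family_on_def)
  then show ?thesis using True assms(2) by (simp add: sum.If_cases)
qed auto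

lemma sum_indicator_eq_card:
  "(\<Sum>y\<in>(UNIV::'a::finite set). if P y then 1 else 0 :: int) = int (card {y. P y})"
  by (simp add: sum.If_cases)

lemma Union_disjoint_family_eq_card:
  assumes "finite T" "finite I" "disjoint_family_on S I" "\<And>i. i \<in> I \<Longrightarrow> S i \<subseteq> T"
    and "(\<Sum>i\<in>I. card (S i)) = card T"
  shows "(\<Union>i\<in>I. S i) = T"
proof (rule card_subset_eq)
  show "card (\<Union>i\<in>I. S i) = card T"
    using assms by (subst card_UN_disjoint') (auto intro: finite_subset)
qed (use assms in auto)

locale partition_digraph =
  fixes n m :: nat and S :: "nat \<Rightarrow> 'a::{finite,ab_group_add} set" and \<phi> :: "nat \<Rightarrow> 'a \<Rightarrow> 'a"
  assumes disjoint: "disjoint_family_on S {0..<n}"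
    and cover: "(\<Union>j\<in>{0..<n}. S j) = - {0}"
    and card_S: "j < n \<Longrightarrow> card (S j) = m"
    and bij: "j < n \<Longrightarrow> bij (\<phi> j)"
begin

definition adj :: "nat \<times> 'a \<Rightarrow> nat \<times> 'a \<Rightarrow> int" where
  "adj u w = (if \<phi> (fst u) (snd u) - \<phi> (fst w) (snd w) \<in> S (fst u) then 1 else 0)"

lemma \<phi>_inv: "j < n \<Longrightarrow> \<phi> j (inv (\<phi> j) y) = y"
  using bij by (simp add: bij_is_surj surj_f_inv_f)

lemma sum_vertices:
  "(\<Sum>v\<in>{0..<n} \<times> UNIV. f v) = (\<Sum>j\<in>{0..<n}. \<Sum>y\<in>UNIV. f (j, inv (\<phi> j) y))"
proof -
  have "(\<Sum>v\<in>{0..<n} \<times> UNIV. f v) = (\<Sum>j\<in>{0..<n}. \<Sum>y\<in>UNIV. f (j, y))"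
    by (simp add: sum.cartesian_product)
  also have "\<dots> = (\<Sum>j\<in>{0..<n}. \<Sum>y\<in>UNIV. f (j, inv (\<phi> j) y))"
    using bij by (intro sum.cong refl sum.reindex_bij_betw[symmetric] bij_imp_bij_inv) auto
  finally show ?thesis .
qed

lemma adj_0_1: "adj u w = 0 \<or> adj u w = 1"
  by (simp add: adj_def)

lemma adj_self: "i < n \<Longrightarrow> adj (i, x) (i, x) = 0"
  using cover by (auto simp: adj_def)

lemma row_sum: "i < n \<Longrightarrow> (\<Sum>w\<in>{0..<n} \<times> UNIV. adj (i, x) w) = int (n * m)"
  using card_S by (simp add: sum_vertices adj_def \<phi>_inv sum_indicator_eq_card card_preimage_minus_left)

lemma col_sum: "l < n \<Longrightarrow> (\<Sum>u\<in>{0..<n} \<times> UNIV. adj u (l, z)) = int (n * m)"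
  using card_S by (simp add: sum_vertices adj_def \<phi>_inv sum_indicator_eq_card card_preimage_minus_right)

lemma adj_square:
  assumes "i < n" "l < n"
  shows "(\<Sum>v\<in>{0..<n} \<times> UNIV. adj (i, x) v * adj v (l, z)) = int m - adj (i, x) (l, z)"
proof -
  define x' z' where "x' = \<phi> i x" and "z' = \<phi> l z"
  have "(\<Sum>v\<in>{0..<n} \<times> UNIV. adj (i, x) v * adj v (l, z))
      = (\<Sum>y\<in>UNIV. \<Sum>j\<in>{0..<n}. (if x' - y \<in> S i then 1 else 0) * (if y - z' \<in> S j then 1 else 0))"
    unfolding sum_vertices sum.swap[of _ "{0..<n}"]
    by (intro sum.cong) (auto simp: adj_def x'_def z'_def \<phi>_inv)
  also have "\<dots> = (\<Sum>y\<in>UNIV. if x' - y \<in> S i \<and> y \<noteq> z' then 1 else 0)"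
    by (simp add: sum_distrib_left[symmetric] sum_indicator_disjoint_family[OF disjoint] cover)
      (intro sum.cong; simp)
  also have "\<dots> = int (card ({y. x' - y \<in> S i} - {z'}))"
    by (simp add: sum_indicator_eq_card set_diff_eq)
  also have "\<dots> = int m - adj (i, x) (l, z)"
    using card_S[OF assms(1)] card_gt_0_iff[of "S i"]
    by (auto simp: adj_def x'_def z'_def card_preimage_minus_left card_Diff_singleton_if of_nat_diff)
  finally show ?thesis .
qed

theorem dsrg: "dsrg ({0..<n} \<times> UNIV) adj (n * card (UNIV :: 'a set)) (n * m) m (m - 1) m"
  unfolding dsrg_def
proof (intro conjI ballI)
  fix u w assume "u \<in> {0..<n} \<times> (UNIV :: 'a set)" "w \<in> {0..<n} \<times> (UNIV :: 'a set)"
  then obtain i x l z where u: "u = (i, x)" "i < n" and w: "w = (l, z)" "l < n" by auto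
  have "0 \<le> (\<Sum>v\<in>{0..<n} \<times> UNIV. adj u v * adj v w)" by (intro sum_nonneg) (simp add: adj_def)
  then show "(\<Sum>v\<in>{0..<n} \<times> UNIV. adj u v * adj v w) = int m * (if u = w then 1 else 0)
      + int (m - 1) * adj u w + int m * (1 - (if u = w then 1 else 0) - adj u w)"
    using adj_square[OF u(2) w(2), of x z] adj_self[OF u(2), of x]
    by (cases "u = w") (auto simp: u w adj_def of_nat_diff algebra_simps)
qed (auto simp: card_cartesian_product adj_0_1 adj_self row_sum col_sum)

end

lemma finite_field_power_card_minus_one:
  fixes x :: "'a::{finite,field}"
  assumes "x \<noteq> 0"
  shows "x ^ (card (UNIV :: 'a set) - 1) = 1"
proof -
  have "(\<Prod>y\<in>UNIV - {0}. x * y) = (\<Prod>y\<in>UNIV - {0}. y)"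
    by (rule prod.reindex_bij_witness[of _ "\<lambda>y. y / x" "\<lambda>y. x * y"]) (use assms in auto)
  moreover have "(\<Prod>y\<in>UNIV - {0}. x * y) = x ^ (card (UNIV :: 'a set) - 1) * (\<Prod>y\<in>UNIV - {0}. y)"
    by (simp add: prod.distrib)
  ultimately show ?thesis by simp
qed

lemma field_card_ge_two: "2 \<le> card (UNIV :: 'a::{finite,field} set)"
  using card_mono[of UNIV "{0, 1 :: 'a}"] by simp

lemma primitive_elem_nonzero:
  fixes \<gamma> :: "'a::{finite,field}"
  assumes "primitive_elem \<gamma>" and "2 < card (UNIV :: 'a set)"
  shows "\<gamma> \<noteq> 0"
proof
  assume "\<gamma> = 0"
  have "UNIV \<subseteq> {0, 1 :: 'a}"
  proof
    fix y :: 'a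
    show "y \<in> {0, 1}"
    proof (cases "y = 0")
      case False
      then obtain k where "y = \<gamma> ^ k" using assms(1) unfolding primitive_elem_def by blast
      with False \<open>\<gamma> = 0\<close> show ?thesis by (cases k) auto
    qed simp
  qed
  then have "card (UNIV :: 'a set) \<le> card {0, 1 :: 'a}" by (intro card_mono) auto
  with assms(2) show False by simp
qed

lemma primitive_elem_power_eq_iff:
  fixes \<gamma> :: "'a::{finite,field}"
  assumes "primitive_elem \<gamma>" and "\<gamma> \<noteq> 0"
  defines "N \<equiv> card (UNIV :: 'a set) - 1"
  shows "\<gamma> ^ k = \<gamma> ^ l \<longleftrightarrow> k mod N = l mod N"
proof -
  have "0 < N" using field_card_ge_two[where 'a = 'a] by (simp add: N_def)
  have power_mod: "\<gamma> ^ k = \<gamma> ^ (k mod N)" for k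
  proof -
    have "\<gamma> ^ k = (\<gamma> ^ N) ^ (k div N) * \<gamma> ^ (k mod N)"
      by (simp only: power_mult[symmetric] power_add[symmetric] mult_div_mod_eq)
    then show ?thesis using finite_field_power_card_minus_one[OF assms(2)] by (simp add: N_def)
  qed
  have "UNIV - {0} \<subseteq> (\<lambda>k. \<gamma> ^ k) ` {..<N}"
  proof
    fix y :: 'a assume "y \<in> UNIV - {0}"
    then obtain k where "y = \<gamma> ^ k" using assms(1) unfolding primitive_elem_def by auto
    then show "y \<in> (\<lambda>k. \<gamma> ^ k) ` {..<N}"
      using power_mod[of k] \<open>0 < N\<close> by (intro image_eqI[where x = "k mod N"]) auto
  qed
  then have "card (UNIV - {0 :: 'a}) \<le> card ((\<lambda>k. \<gamma> ^ k) ` {..<N})"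
    by (intro card_mono) auto
  then have "inj_on (\<lambda>k. \<gamma> ^ k) {..<N}"
    using card_image_le[of "{..<N}" "\<lambda>k. \<gamma> ^ k"] by (intro eq_card_imp_inj_on) (auto simp: N_def)
  then have "\<gamma> ^ (k mod N) = \<gamma> ^ (l mod N) \<longleftrightarrow> k mod N = l mod N"
    using \<open>0 < N\<close> by (intro inj_on_eq_iff) auto
  then show ?thesis using power_mod[of k] power_mod[of l] by simp
qed

lemma cyc_class_eq_image: "cyc_class \<gamma> e r = (\<lambda>d. \<gamma> ^ r * d) ` cyc_class \<gamma> e 0"
  by (auto simp: cyc_class_def power_add)

lemma zero_notin_cyc_class: "\<gamma> \<noteq> 0 \<Longrightarrow> 0 \<notin> cyc_class \<gamma> e r"
  by (auto simp: cyc_class_def)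

lemma card_cyc_class:
  fixes \<gamma> :: "'a::{finite,field}"
  assumes "primitive_elem \<gamma>" "\<gamma> \<noteq> 0" "card (UNIV :: 'a set) = e * m + 1"
  shows "card (cyc_class \<gamma> e r) = m"
proof -
  have "0 < e" "0 < m" using field_card_ge_two[where 'a = 'a] assms(3) by (auto intro!: gr0I)
  have "cyc_class \<gamma> e 0 = (\<lambda>k. \<gamma> ^ (e * k)) ` {..<m}"
  proof (rule set_eqI)
    fix x
    have "\<gamma> ^ (e * k) = \<gamma> ^ (e * (k mod m))" for k
      using primitive_elem_power_eq_iff[OF assms(1,2)] assms(3) by (simp add: mod_mult_mult1)
    then show "x \<in> cyc_class \<gamma> e 0 \<longleftrightarrow> x \<in> (\<lambda>k. \<gamma> ^ (e * k)) ` {..<m}"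
      using \<open>0 < m\<close> by (auto simp: cyc_class_def intro!: image_eqI[where x = "_ mod m"])
  qed
  moreover have "inj_on (\<lambda>k. \<gamma> ^ (e * k)) {..<m}"
    using primitive_elem_power_eq_iff[OF assms(1,2)] assms(3) \<open>0 < e\<close>
    by (auto intro!: inj_onI simp: mod_mult_mult1)
  ultimately have "card (cyc_class \<gamma> e 0) = m" by (simp add: card_image)
  then show ?thesis
    using assms(2) by (simp add: cyc_class_eq_image[of \<gamma> e r] card_image inj_on_def)
qed

lemma cyc_class_disjoint:
  fixes \<gamma> :: "'a::{finite,field}"
  assumes "primitive_elem \<gamma>" "\<gamma> \<noteq> 0" "card (UNIV :: 'a set) = e * m + 1"
    and "r mod e \<noteq> s mod e"
  shows "cyc_class \<gamma> e r \<inter> cyc_class \<gamma> e s = {}"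
proof (rule ccontr)
  assume "cyc_class \<gamma> e r \<inter> cyc_class \<gamma> e s \<noteq> {}"
  then obtain k l where "\<gamma> ^ (r + e * k) = \<gamma> ^ (s + e * l)" by (auto simp: cyc_class_def)
  then have "(r + e * k) mod (e * m) mod e = (s + e * l) mod (e * m) mod e"
    using primitive_elem_power_eq_iff[OF assms(1,2)] assms(3) by simp
  with assms(4) show False by (simp add: mod_mod_cancel)
qed

lemma Union_cyc_class_eq:
  fixes \<gamma> :: "'a::{finite,field}"
  assumes "primitive_elem \<gamma>" "\<gamma> \<noteq> 0" "card (UNIV :: 'a set) = e * m + 1"
    and "disjoint_family_on (\<lambda>i. cyc_class \<gamma> e (r i)) {0..<e}"
  shows "(\<Union>i\<in>{0..<e}. cyc_class \<gamma> e (r i)) = - {0}"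
proof (rule Union_disjoint_family_eq_card[OF _ _ assms(4)])
  show "cyc_class \<gamma> e (r i) \<subseteq> - {0}" for i
    using zero_notin_cyc_class[OF assms(2)] by auto
  show "(\<Sum>i\<in>{0..<e}. card (cyc_class \<gamma> e (r i))) = card (- {0 :: 'a})"
    using assms(3) by (simp add: card_cyc_class[OF assms(1-3)] Compl_eq_Diff_UNIV)
qed simp_all

lemma Cmat_eq: "Cmat \<gamma> e \<sigma> x y = (if x - \<sigma> * y \<in> cyc_class \<gamma> e 0 then 1 else 0)"
proof -
  have "x \<in> {\<sigma> * y + d | d. d \<in> cyc_class \<gamma> e 0} \<longleftrightarrow> x - \<sigma> * y \<in> cyc_class \<gamma> e 0"
    by (auto intro!: exI[where x = "x - \<sigma> * y"])
  then show ?thesis by (simp add: Cmat_def)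
qed

definition Mexp :: "nat \<Rightarrow> nat" where
  "Mexp i = (if i = 0 then 0 else if i = 1 then 2 else 1)"

lemma Mmat_eq_quotient: "a \<noteq> 0 \<Longrightarrow> Mmat a i j = a ^ Mexp j / a ^ Mexp i"
  by (simp add: Mmat_def Mexp_def power2_eq_square field_simps)

lemma block_adj_eq_rescaled:
  fixes \<gamma> :: "'a::{finite,field}"
  assumes "\<gamma> \<noteq> 0"
  shows "block_adj \<gamma> (\<gamma> ^ n) = (\<lambda>u w.
           if (\<gamma> ^ n) ^ Mexp (fst u) * snd u - (\<gamma> ^ n) ^ Mexp (fst w) * snd w
              \<in> cyc_class \<gamma> 3 (n * Mexp (fst u)) then 1 else 0)"
proof (intro ext)
  fix u w :: "nat \<times> 'a"
  define c where "c = (\<gamma> ^ n) ^ Mexp (fst u)"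
  have "c \<noteq> 0" using assms by (simp add: c_def)
  have "(c * snd u - (\<gamma> ^ n) ^ Mexp (fst w) * snd w) / c = snd u - Mmat (\<gamma> ^ n) (fst u) (fst w) * snd w"
    using assms by (simp add: c_def Mmat_eq_quotient diff_divide_distrib)
  moreover have "t \<in> cyc_class \<gamma> 3 (n * Mexp (fst u)) \<longleftrightarrow> t / c \<in> cyc_class \<gamma> 3 0" for t
    using \<open>c \<noteq> 0\<close> by (auto simp: c_def cyc_class_eq_image[of _ _ "n * _"] power_mult
        intro!: image_eqI[where x = "t / c"])
  ultimately show "block_adj \<gamma> (\<gamma> ^ n) u w = (if c * snd u - (\<gamma> ^ n) ^ Mexp (fst w) * snd w
      \<in> cyc_class \<gamma> 3 (n * Mexp (fst u)) then 1 else 0)"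
    by (simp add: block_adj_def Cmat_eq)
qed

lemma disjoint_family_cyc_class_Mexp:
  fixes \<gamma> :: "'a::{finite,field}"
  assumes "primitive_elem \<gamma>" "\<gamma> \<noteq> 0" "card (UNIV :: 'a set) = 3 * m + 1"
    and "n mod 3 \<noteq> 0"
  shows "disjoint_family_on (\<lambda>i. cyc_class \<gamma> 3 (n * Mexp i)) {0..<3}"
proof (unfold disjoint_family_on_def, intro ballI impI)
  fix i j :: nat assume "i \<in> {0..<3}" "j \<in> {0..<3}" "i \<noteq> j"
  then have "Mexp i \<in> {0, 1, 2}" "Mexp j \<in> {0, 1, 2}" "Mexp i \<noteq> Mexp j"
    by (auto simp: Mexp_def)
  moreover have "n mod 3 = 1 \<or> n mod 3 = 2" using assms(4) by linarith
  moreover have "n * 2 mod 3 = n mod 3 * 2 mod 3" by (simp add: mod_mult_left_eq)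
  ultimately have "n * Mexp i mod 3 \<noteq> n * Mexp j mod 3" by auto
  then show "cyc_class \<gamma> 3 (n * Mexp i) \<inter> cyc_class \<gamma> 3 (n * Mexp j) = {}"
    by (rule cyc_class_disjoint[OF assms(1-3)])
qed

theorem mainTheorem9:
  fixes \<gamma> a :: "'a::{finite,field}" and m :: nat
  assumes "primitive_elem \<gamma>"
    and "card (UNIV :: 'a set) = 3 * m + 1"
    and "a \<in> cyc_class \<gamma> 3 1 \<union> cyc_class \<gamma> 3 2"
  shows "dsrg ({0..<3} \<times> UNIV) (block_adj \<gamma> a)
           (3 * (3 * m + 1)) (3 * m) m (m - 1) m"
proof -
  have "\<gamma> \<noteq> 0"
    using assms(2) field_card_ge_two[where 'a = 'a] by (intro primitive_elem_nonzero[OF assms(1)]) simp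
  obtain n where a: "a = \<gamma> ^ n" and "n mod 3 \<noteq> 0"
  proof -
    from assms(3) obtain r k where "a = \<gamma> ^ (r + 3 * k)" "r = 1 \<or> r = 2"
      unfolding cyc_class_def by blast
    then show thesis by (intro that[of "r + 3 * k"]) auto
  qed
  interpret G: partition_digraph 3 m "\<lambda>i. cyc_class \<gamma> 3 (n * Mexp i)" "\<lambda>i x. (\<gamma> ^ n) ^ Mexp i * x"
  proof
    show disj: "disjoint_family_on (\<lambda>i. cyc_class \<gamma> 3 (n * Mexp i)) {0..<3}"
      by (rule disjoint_family_cyc_class_Mexp[OF assms(1) \<open>\<gamma> \<noteq> 0\<close> assms(2) \<open>n mod 3 \<noteq> 0\<close>])
    show "(\<Union>i\<in>{0..<3}. cyc_class \<gamma> 3 (n * Mexp i)) = - {0}"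
      by (rule Union_cyc_class_eq[OF assms(1) \<open>\<gamma> \<noteq> 0\<close> assms(2) disj])
    show "card (cyc_class \<gamma> 3 (n * Mexp i)) = m" for i
      by (rule card_cyc_class[OF assms(1) \<open>\<gamma> \<noteq> 0\<close> assms(2)])
    show "bij (\<lambda>x. (\<gamma> ^ n) ^ Mexp i * x)" for i
      using \<open>\<gamma> \<noteq> 0\<close> by (intro o_bij[where g = "\<lambda>x. x / (\<gamma> ^ n) ^ Mexp i"]) (auto simp: fun_eq_iff)
  qed
  have "block_adj \<gamma> a = G.adj"
    by (simp add: a block_adj_eq_rescaled[OF \<open>\<gamma> \<noteq> 0\<close>] G.adj_def[abs_def])
  then show ?thesis using G.dsrg assms(2) by simp
qed

end
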